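(* Let $F=(f_a)_{a\in D}$ be a planar analytic function on a region $D\subseteq\mathbb C$ and let $T\in\mathbb P$. Then the function $h_T:D\to\mathbb C$, $h_T(a)=\langle f_a,(x-a)^T\rangle$, is holomorphic on $D$.
   Context: Let $\mathbb P$ denote the set of finite planar reduced rooted trees (children of each vertex linearly ordered, no vertex with exactly one child), including the empty tree $\mathbf 1$ and the one-vertex tree $|$; $\deg(T)$ is the number of leaves, $L(T)$ the set of leaves. The algebra $\mathbb C\{x\}_{\mathbb P}$ has basis $\{x^T\}$, $x^{\mathbf 1}=1$, $x^|=x$, with $k$-linear operations $\omega_k$ ($k\ge2$), $\omega_k(x^{T_1},\dots,x^{T_k})=x^T$ where $T$ is obtained by attaching the nonempty $T_i$ in order as subtrees of the children of a new root (if exactly one is nonempty, $T$ is that one; if none, $T=\mathbf 1$); $y^T$ denotes the iteration along $T$ starting from $y$, e.g. $(x-a)^T$. $\mathbb C\{\{x-a\}\}_{\mathbb P}$ is the space of formal series $\sum_T\gamma_T(x-a)^T$ with coefficients $\langle f,(x-a)^T\rangle$. Radius of convergence: $\operatorname{rad}(\sum_T\gamma_T(x-a)^T)=\sup\{\rho\ge0:\sum_T|\gamma_T|\rho^{\deg T}<\infty\}$. Contraction $S|I$ for $I\subseteq L(S)$: the tree obtained from the subtree of $S$ spanned by the root-to-leaf paths to leaves in $I$ by suppressing all vertices with exactly one child; $(S/T)=\#\{I\subseteq L(S):S|I=T\}$. If $|b-a|<\operatorname{rad}(f)$, the expansion of $f\in\mathbb C\{\{x-a\}\}_{\mathbb P}$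 around $b$ is $\sum_T\gamma_T(b)(x-b)^T$ with $\gamma_T(b)=\sum_{U}\langle f,(x-a)^U\rangle(U/T)(b-a)^{\deg U-\deg T}$. A planar analytic function on a region $D$ is a family $F=(f_a)_{a\in D}$ with $f_a\in\mathbb C\{\{x-a\}\}_{\mathbb P}$, $\operatorname{rad}(f_a)>0$, such that whenever $a,b\in D$ and $\operatorname{rad}(f_a)>|b-a|$, the expansion of $f_a$ around $b$ equals $f_b$. *)

theory Defs
  imports "HOL-Analysis.Analysis"
begin

datatype ptree = Lf | Nd "ptree list"

fun reduced :: "ptree \<Rightarrow> bool" where
  "reduced Lf = True"
| "reduced (Nd ts) = (length ts \<ge> 2 \<and> (\<forall>t\<in>set ts. reduced t))"

(* The set P: None is the empty tree 1, Some Lf is the one-vertex tree | *)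
definition PTrees :: "ptree option set" where
  "PTrees = {None} \<union> Some ` {t. reduced t}"

fun deg :: "ptree \<Rightarrow> nat" where
  "deg Lf = 1"
| "deg (Nd ts) = sum_list (map deg ts)"

definition degP :: "ptree option \<Rightarrow> nat" where
  "degP T = (case T of None \<Rightarrow> 0 | Some t \<Rightarrow> deg t)"

(* Contraction: leaves are indexed 0..deg-1 from left to right. restr t I keeps the
   root-to-leaf paths to the leaves in I and suppresses vertices with exactly one child;
   restr_list returns the list of nonempty restricted children. *)
fun restr :: "ptree \<Rightarrow> nat set \<Rightarrow> ptree option"
and restr_list :: "ptree list \<Rightarrow> nat set \<Rightarrow> ptree list" where
  "restr Lf I = (if 0 \<in> I then Some Lf else None)"
| "restr (Nd ts) I = (case restr_list ts I of [] \<Rightarrow> None | [u] \<Rightarrow> Some u | us \<Rightarrow> Some (Nd us))"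
| "restr_list [] I = []"
| "restr_list (t # ts) I =
     (case restr t I of None \<Rightarrow> [] | Some u \<Rightarrow> [u])
     @ restr_list ts ((\<lambda>j. j - deg t) ` {j\<in>I. deg t \<le> j})"

definition contr :: "ptree option \<Rightarrow> nat set \<Rightarrow> ptree option" where
  "contr S I = (case S of None \<Rightarrow> None | Some s \<Rightarrow> restr s I)"

definition contr_count :: "ptree option \<Rightarrow> ptree option \<Rightarrow> nat" where
  "contr_count S T = card {I. I \<subseteq> {..<degP S} \<and> contr S I = T}"

(* A formal series sum_T gamma_T (x-a)^T is represented by its coefficient function
   gamma :: ptree option \<Rightarrow> complex (only values on PTrees matter). *)
definition rad :: "(ptree option \<Rightarrow> complex) \<Rightarrow> ereal" where
  "rad g = Sup {ereal \<rho> | \<rho>. \<rho> \<ge> 0 \<and>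
                 (\<lambda>T. norm (g T) * \<rho> ^ degP T) summable_on PTrees}"

(* coefficient gamma_T(b) of the expansion around b of the series g centred at a *)
definition expand :: "(ptree option \<Rightarrow> complex) \<Rightarrow> complex \<Rightarrow> complex \<Rightarrow> ptree option \<Rightarrow> complex" where
  "expand g a b T = (\<Sum>\<^sub>\<infinity>U\<in>PTrees. g U * of_nat (contr_count U T) * (b - a) ^ (degP U - degP T))"

definition region :: "complex set \<Rightarrow> bool" where
  "region D \<longleftrightarrow> open D \<and> connected D \<and> D \<noteq> {}"

definition planar_analytic :: "complex set \<Rightarrow> (complex \<Rightarrow> ptree option \<Rightarrow> complex) \<Rightarrow> bool" where
  "planar_analytic D F \<longleftrightarrow>
     (\<forall>a\<in>D. rad (F a) > 0) \<and>
     (\<forall>a\<in>D. \<forall>b\<in>D. ereal (cmod (b - a)) < rad (F a) \<longrightarrow>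
        (\<forall>T\<in>PTrees. expand (F a) a b T = F b T))"

end

theory Submission
  imports Defs "HOL-Complex_Analysis.Complex_Analysis"
begin

(* Near a, h_T(b) is the T-coefficient of the expansion of f_a around b, a series in (b - a)
   whose U-th term is bounded by |<f_a,(x-a)^U>| 2^deg U |b - a|^(deg U - deg T), since
   (U/T) counts subsets of the leaves of U. For |b - a| <= rho/2 this is dominated by
   (1 + 2/rho)^deg T |<f_a,(x-a)^U>| rho^deg U, which is summable for some rho > 0 because
   rad f_a > 0. By the Weierstrass M-test the series converges uniformly, so its sum is
   holomorphic near a. *)

lemma holomorphic_on_infsum_Weierstrass:
  fixes f :: "'a \<Rightarrow> complex \<Rightarrow> complex" and M :: "'a \<Rightarrow> real"
  assumes hol: "\<And>x. x \<in> A \<Longrightarrow> f x holomorphic_on S" and "cball z r \<subseteq> S"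
    and bound: "\<And>x w. x \<in> A \<Longrightarrow> w \<in> cball z r \<Longrightarrow> norm (f x w) \<le> M x"
    and "M summable_on A"
  shows "(\<lambda>w. \<Sum>\<^sub>\<infinity>x\<in>A. f x w) holomorphic_on ball z r"
proof (rule holomorphic_uniform_limit)
  show "uniform_limit (cball z r) (\<lambda>X w. \<Sum>x\<in>X. f x w) (\<lambda>w. \<Sum>\<^sub>\<infinity>x\<in>A. f x w)
          (finite_subsets_at_top A)"
    using bound \<open>M summable_on A\<close> by (rule Weierstrass_m_test_general)
  show "\<forall>\<^sub>F X in finite_subsets_at_top A.
          continuous_on (cball z r) (\<lambda>w. \<Sum>x\<in>X. f x w) \<and> (\<lambda>w. \<Sum>x\<in>X. f x w) holomorphic_on ball z r"
  proof (rule eventually_finite_subsets_at_top_weakI)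
    fix X assume "finite X" "X \<subseteq> A"
    then have sum_hol: "(\<lambda>w. \<Sum>x\<in>X. f x w) holomorphic_on S"
      using hol by (intro holomorphic_on_sum) auto
    show "continuous_on (cball z r) (\<lambda>w. \<Sum>x\<in>X. f x w) \<and> (\<lambda>w. \<Sum>x\<in>X. f x w) holomorphic_on ball z r"
      using holomorphic_on_imp_continuous_on[OF sum_hol] sum_hol \<open>cball z r \<subseteq> S\<close> ball_subset_cball
      by (metis continuous_on_subset holomorphic_on_subset order_trans)
  qed
qed auto

lemma power_diff_le_power_mult:
  fixes r :: real
  assumes "r > 0"
  shows "r ^ (n - k) \<le> r ^ n * (1 + 1/r) ^ k"
proof (cases "k \<le> n")
  case True
  have "r ^ (n - k) = r ^ n * (1/r) ^ k"
    using True assms by (simp add: power_diff power_divide)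
  also have "\<dots> \<le> r ^ n * (1 + 1/r) ^ k"
    using assms by (intro mult_left_mono power_mono) auto
  finally show ?thesis .
next
  case False
  have "r ^ (n - k) = r ^ n * (1/r) ^ n"
    using False assms by (simp add: power_divide)
  also have "\<dots> \<le> r ^ n * (1 + 1/r) ^ n"
    using assms by (intro mult_left_mono power_mono) auto
  also have "\<dots> \<le> r ^ n * (1 + 1/r) ^ k"
    using assms False by (intro mult_left_mono power_increasing) auto
  finally show ?thesis .
qed

lemma contr_count_le_power_two: "contr_count U T \<le> 2 ^ degP U"
proof -
  have "contr_count U T \<le> card (Pow {..<degP U})"
    unfolding contr_count_def by (intro card_mono) auto
  then show ?thesis by (simp add: card_Pow)
qed

lemma rad_pos_obtain_summable:
  assumes "rad g > 0"
  obtains \<rho> where "\<rho> > 0" "ereal \<rho> \<le> rad g"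
    "(\<lambda>U. norm (g U) * \<rho> ^ degP U) summable_on PTrees"
proof -
  obtain \<rho> where "\<rho> \<ge> 0" "0 < ereal \<rho>" and summable:
      "(\<lambda>U. norm (g U) * \<rho> ^ degP U) summable_on PTrees"
    using assms unfolding rad_def by (auto simp: less_Sup_iff)
  moreover have "ereal \<rho> \<le> rad g"
    unfolding rad_def using \<open>\<rho> \<ge> 0\<close> summable by (intro Sup_upper) auto
  ultimately show ?thesis using that by simp
qed

lemma expand_holomorphic_on_ball:
  assumes "0 < r" "2 * r \<le> \<rho>"
    and summable: "(\<lambda>U. norm (g U) * \<rho> ^ degP U) summable_on PTrees"
  shows "(\<lambda>b. expand g a b T) holomorphic_on ball a r"
proof -
  define C where "C = (1 + 1/r) ^ degP T"
  define M where "M U = norm (g U) * 2 ^ degP U * r ^ (degP U - degP T)" for U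
  have M_le: "M U \<le> C * (norm (g U) * \<rho> ^ degP U)" for U
  proof -
    have "2 ^ degP U * r ^ (degP U - degP T) \<le> 2 ^ degP U * (r ^ degP U * C)"
      unfolding C_def using power_diff_le_power_mult[OF \<open>0 < r\<close>] by (intro mult_left_mono) auto
    also have "\<dots> = (2 * r) ^ degP U * C"
      by (simp add: power_mult_distrib)
    also have "\<dots> \<le> \<rho> ^ degP U * C"
      using assms by (intro mult_right_mono power_mono) (auto simp: C_def)
    finally show ?thesis
      unfolding M_def by (metis mult.assoc mult.commute mult_left_mono norm_ge_zero)
  qed
  have "M summable_on PTrees"
  proof (rule summable_on_comparison_test)
    show "(\<lambda>U. C * (norm (g U) * \<rho> ^ degP U)) summable_on PTrees"
      using summable by (rule summable_on_cmult_right)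
  qed (use M_le \<open>0 < r\<close> in \<open>auto simp: M_def\<close>)
  moreover have "norm (g U * of_nat (contr_count U T) * (b - a) ^ (degP U - degP T)) \<le> M U"
    if "b \<in> cball a r" for U b
  proof -
    have "norm (g U * of_nat (contr_count U T) * (b - a) ^ (degP U - degP T))
          = norm (g U) * of_nat (contr_count U T) * cmod (b - a) ^ (degP U - degP T)"
      by (simp add: norm_mult norm_power)
    also have "\<dots> \<le> M U"
      unfolding M_def using that contr_count_le_power_two[of U T]
      by (intro mult_mono power_mono) (auto simp: dist_norm norm_minus_commute)
    finally show ?thesis .
  qed
  ultimately show ?thesis
    unfolding expand_def
    by (intro holomorphic_on_infsum_Weierstrass[where S = UNIV] holomorphic_intros) auto
qed

theorem mainTheorem5:
  fixes D :: "complex set" and F :: "complex \<Rightarrow> ptree option \<Rightarrow> complex" and T :: "ptree option"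
  assumes "region D" and "planar_analytic D F" and "T \<in> PTrees"
  shows "(\<lambda>a. F a T) holomorphic_on D"
proof -
  have "(\<lambda>b. F b T) analytic_on D"
    unfolding analytic_on_def
  proof
    fix a assume "a \<in> D"
    obtain \<rho> where "\<rho> > 0" "ereal \<rho> \<le> rad (F a)"
      and summable: "(\<lambda>U. norm (F a U) * \<rho> ^ degP U) summable_on PTrees"
      using assms(2) \<open>a \<in> D\<close> unfolding planar_analytic_def by (metis rad_pos_obtain_summable)
    obtain e where "e > 0" "ball a e \<subseteq> D"
      using assms(1) \<open>a \<in> D\<close> unfolding region_def by (meson openE)
    define r where "r = min e (\<rho> / 2)"
    have "r > 0" "2 * r \<le> \<rho>"
      using \<open>e > 0\<close> \<open>\<rho> > 0\<close> by (auto simp: r_def)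
    have expansion: "expand (F a) a b T = F b T" if "b \<in> ball a r" for b
    proof -
      have "b \<in> D" using that \<open>ball a e \<subseteq> D\<close> by (auto simp: r_def)
      moreover have "cmod (b - a) < \<rho>"
        using that \<open>2 * r \<le> \<rho>\<close> \<open>r > 0\<close> by (auto simp: dist_norm norm_minus_commute)
      then have "ereal (cmod (b - a)) < rad (F a)"
        using \<open>ereal \<rho> \<le> rad (F a)\<close> by (metis less_ereal.simps(1) less_le_trans)
      ultimately show ?thesis
        using assms(2,3) \<open>a \<in> D\<close> unfolding planar_analytic_def by blast
    qed
    have "(\<lambda>b. F b T) holomorphic_on ball a r"
      using expand_holomorphic_on_ball[OF \<open>r > 0\<close> \<open>2 * r \<le> \<rho>\<close> summable]
      by (rule holomorphic_transform) (rule expansion)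
    then show "\<exists>e>0. (\<lambda>b. F b T) holomorphic_on ball a e"
      using \<open>r > 0\<close> by blast
  qed
  then show ?thesis
    by (rule analytic_imp_holomorphic)
qed

end
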